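(* For all $D,E\in\mathcal{C}^\uparrow$: (i) $\mathcal{S}(\mathcal{S}(D))=D$; (ii) $d_1(\mathcal{S}(D),\mathcal{S}(E))=d_1(D,E)$; (iii) $\|\mathcal{S}(D)\|_{\partial_2,1}=\|D\|_{\partial_2,1}$.
   Context: $\mathcal{C}^\uparrow$ is the class of SI bivariate copulas ($C(v,\cdot)$ concave for every $v$). $\partial_2$ is the partial derivative in the second argument. For $C\in\mathcal{C}^\uparrow$: $\partial_2^+C(v,t):=\lim_{s\downarrow t}\partial_2C(v,s)$, for decreasing right-continuous $f$, $f^{-1}(w):=\inf\{t\in[0,1]:f(t)\le w\}$, and $\mathcal{S}(C)(v,u):=\int_0^u(\partial_2^+C(v,\cdot))^{-1}(t)\,dt$ (which is again an SI copula). For $p\ge1$, $\|C\|_{\partial_2,p}:=\left(\int_0^1\int_0^1|\partial_2C(u,v)|^p\,du\,dv\right)^{1/p}$ and $d_p(D,E):=\|D-E\|_{\partial_2,p}$. *)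

theory Defs
  imports "HOL-Analysis.Analysis"
begin

definition copula :: "(real \<Rightarrow> real \<Rightarrow> real) \<Rightarrow> bool" where
  "copula C \<longleftrightarrow>
     (\<forall>u\<in>{0..1}. C u 0 = 0 \<and> C 0 u = 0 \<and> C u 1 = u \<and> C 1 u = u) \<and>
     (\<forall>u1 u2 v1 v2. 0 \<le> u1 \<and> u1 \<le> u2 \<and> u2 \<le> 1 \<and> 0 \<le> v1 \<and> v1 \<le> v2 \<and> v2 \<le> 1 \<longrightarrow>
        C u2 v2 - C u2 v1 - C u1 v2 + C u1 v1 \<ge> 0)"

definition SI_copula :: "(real \<Rightarrow> real \<Rightarrow> real) \<Rightarrow> bool" where
  "SI_copula C \<longleftrightarrow> copula C \<and> (\<forall>v\<in>{0..1}. concave_on {0..1} (\<lambda>t. C v t))"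

text \<open>Partial derivative in the second argument (meaningful where it exists, i.e. a.e.).\<close>
definition partial2 :: "(real \<Rightarrow> real \<Rightarrow> real) \<Rightarrow> real \<Rightarrow> real \<Rightarrow> real" where
  "partial2 C v t = deriv (\<lambda>s. C v s) t"

definition partial2_plus :: "(real \<Rightarrow> real \<Rightarrow> real) \<Rightarrow> real \<Rightarrow> real \<Rightarrow> real" where
  "partial2_plus C v t =
     Lim (at t within {s. t < s \<and> (\<lambda>x. C v x) differentiable (at s)}) (\<lambda>s. partial2 C v s)"

text \<open>Generalized inverse of a decreasing function on [0,1]: inf {t in [0,1]. f t <= w},
  with the convention inf of the empty set = 1.\<close>
definition gen_inv :: "(real \<Rightarrow> real) \<Rightarrow> real \<Rightarrow> real" where
  "gen_inv f w = Inf ({t\<in>{0..1}. f t \<le> w} \<union> {1})"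

definition S_op :: "(real \<Rightarrow> real \<Rightarrow> real) \<Rightarrow> real \<Rightarrow> real \<Rightarrow> real" where
  "S_op C v u = integral {0..u} (\<lambda>t. gen_inv (partial2_plus C v) t)"

definition norm_d2 :: "real \<Rightarrow> (real \<Rightarrow> real \<Rightarrow> real) \<Rightarrow> real" where
  "norm_d2 p C =
     enn2real (\<integral>\<^sup>+ x. indicator ({0..1} \<times> {0..1}) x *
                  ennreal (\<bar>partial2 C (fst x) (snd x)\<bar> powr p) \<partial>lborel) powr (1 / p)"

definition dist_d2 :: "real \<Rightarrow> (real \<Rightarrow> real \<Rightarrow> real) \<Rightarrow> (real \<Rightarrow> real \<Rightarrow> real) \<Rightarrow> real" where
  "dist_d2 p D E = norm_d2 p (\<lambda>u v. D u v - E u v)"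

end

theory Submission
  imports Defs
begin

text \<open>
  For an SI copula D every section D(v,-) is concave with chord slopes in [0,1]. Its right
  derivative g is decreasing, right-continuous and [0,1]-valued; it is a supergradient of
  D(v,-), hence D(v,-) is the integral of g, and it is the right limit of the partial
  derivative. So S(D)(v,-) is the integral of the generalized inverse of g, and (i) holds
  because generalized inversion is an involution on such functions.

  For (ii) and (iii), the partial derivative equals g almost everywhere, and the L1 distance
  between two such functions is the area of the symmetric difference of their hypographs in
  the unit square. Reflection in the diagonal maps this region onto the one for the
  generalized inverses, so by Fubini the distance is preserved; (iii) is the distance to the
  zero function, which is its own generalized inverse.
\<close>

section \<open>Supergradients on the unit interval\<close>

definition decr_rcont :: "(real \<Rightarrow> real) \<Rightarrow> bool" where
  "decr_rcont g \<longleftrightarrow>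
     antimono_on {0..1} g \<and> (\<forall>t\<in>{0..<1}. (g \<longlongrightarrow> g t) (at_right t)) \<and> g ` {0..1} \<subseteq> {0..1}"

lemma decr_rcont_antimono: "decr_rcont g \<Longrightarrow> 0 \<le> x \<Longrightarrow> x \<le> y \<Longrightarrow> y \<le> 1 \<Longrightarrow> g y \<le> g x"
  unfolding decr_rcont_def monotone_on_def by auto

lemma decr_rcont_antimono_on: "decr_rcont g \<Longrightarrow> antimono_on {0..1} g"
  unfolding decr_rcont_def by simp

lemma decr_rcont_right_cont: "decr_rcont g \<Longrightarrow> 0 \<le> t \<Longrightarrow> t < 1 \<Longrightarrow> (g \<longlongrightarrow> g t) (at_right t)"
  and decr_rcont_bounds: "decr_rcont g \<Longrightarrow> 0 \<le> t \<Longrightarrow> t \<le> 1 \<Longrightarrow> 0 \<le> g t \<and> g t \<le> 1"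
  unfolding decr_rcont_def by (auto simp: image_subset_iff)

definition supergradient :: "(real \<Rightarrow> real) \<Rightarrow> (real \<Rightarrow> real) \<Rightarrow> bool" where
  "supergradient F g \<longleftrightarrow> (\<forall>x\<in>{0..1}. \<forall>y\<in>{0..1}. F y \<le> F x + g x * (y - x))"

lemma supergradient_chord_bounds:
  assumes "supergradient F g" "0 \<le> x" "x < y" "y \<le> 1"
  shows "(y - x) * g y \<le> F y - F x" "F y - F x \<le> (y - x) * g x"
proof -
  have "F x \<le> F y + g y * (x - y)" "F y \<le> F x + g x * (y - x)"
    using assms unfolding supergradient_def by auto
  then show "(y - x) * g y \<le> F y - F x" "F y - F x \<le> (y - x) * g x"
    by (simp_all add: algebra_simps)
qed

lemma supergradientI:
  assumes "\<And>x y. 0 \<le> x \<Longrightarrow> x < y \<Longrightarrow> y \<le> 1 \<Longrightarrow> (y - x) * g y \<le> F y - F x \<and> F y - F x \<le> (y - x) * g x"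
  shows "supergradient F g"
  unfolding supergradient_def
proof (intro ballI)
  fix x y :: real assume "x \<in> {0..1}" "y \<in> {0..1}"
  then consider "x < y" | "y < x" | "x = y" by fastforce
  then show "F y \<le> F x + g x * (y - x)"
    by cases (use assms[of x y] assms[of y x] \<open>x \<in> {0..1}\<close> \<open>y \<in> {0..1}\<close> in \<open>auto simp: algebra_simps\<close>)
qed

lemma supergradient_antimono:
  assumes "supergradient F g" "0 \<le> x" "x \<le> y" "y \<le> 1"
  shows "g y \<le> g x"
proof (cases "x = y")
  case False
  then have "x < y" using assms(3) by simp
  then have "(y - x) * g y \<le> (y - x) * g x"
    using supergradient_chord_bounds[OF assms(1,2) _ assms(4)] by (meson order_trans)
  then show ?thesis using \<open>x < y\<close> by simp
qed simp

lemma supergradient_antimono_on: "supergradient F g \<Longrightarrow> antimono_on {0..1} g"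
  by (intro monotone_onI) (auto intro: supergradient_antimono)

lemma supergradient_has_real_derivative:
  assumes F: "supergradient F g" and s: "0 < s" "s < 1" and g: "isCont g s"
  shows "(F has_real_derivative g s) (at s)"
proof -
  have between: "min (g s) (g y) \<le> (F y - F s) / (y - s) \<and> (F y - F s) / (y - s) \<le> max (g s) (g y)"
    if y: "y \<in> {0<..<1}" "y \<noteq> s" for y
  proof (cases "s < y")
    case True
    then have "g y \<le> (F y - F s) / (y - s) \<and> (F y - F s) / (y - s) \<le> g s"
      using supergradient_chord_bounds[OF F, of s y] s y by (auto simp: field_simps)
    then show ?thesis by (auto simp: min_def max_def)
  next
    case False
    then have "y < s" using y by simp
    then have "g s \<le> (F y - F s) / (y - s) \<and> (F y - F s) / (y - s) \<le> g y"
      using supergradient_chord_bounds[OF F, of y s] s y by (auto simp: field_simps)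
    then show ?thesis by (auto simp: min_def max_def)
  qed
  have near: "\<forall>\<^sub>F y in at s. y \<in> {0<..<1} \<and> y \<noteq> s"
    using eventually_at_in_open'[of "{0<..<1}" s] s by (auto simp: eventually_at_filter elim: eventually_mono)
  have "(g \<longlongrightarrow> g s) (at s)" using g by (simp add: isCont_def)
  then have "((\<lambda>y. min (g s) (g y)) \<longlongrightarrow> g s) (at s)" "((\<lambda>y. max (g s) (g y)) \<longlongrightarrow> g s) (at s)"
    by (auto intro: tendsto_eq_intros)
  then have "((\<lambda>y. (F y - F s) / (y - s)) \<longlongrightarrow> g s) (at s)"
    by (rule tendsto_sandwich[rotated 2]) (use near between in \<open>auto elim: eventually_mono\<close>)
  then show ?thesis by (simp add: has_field_derivative_iff)
qed

lemma supergradient_derivative_eq: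
  assumes F: "supergradient F g" and s: "0 < s" "s < 1" and D: "(F has_real_derivative D) (at s)"
  shows "D = g s"
proof -
  have q: "((\<lambda>y. (F y - F s) / (y - s)) \<longlongrightarrow> D) (at s)"
    using D by (simp add: has_field_derivative_iff)
  have "\<forall>\<^sub>F y in at_right s. (F y - F s) / (y - s) \<le> g s"
    using eventually_at_right_real[OF s(2)]
    by (rule eventually_mono) (use supergradient_chord_bounds(2)[OF F, of s] s in \<open>auto simp: field_simps\<close>)
  then have "D \<le> g s"
    using q by (intro tendsto_upperbound[of _ _ "at_right s"]) (auto intro: filterlim_mono simp: at_le)
  moreover have "\<forall>\<^sub>F y in at_left s. g s \<le> (F y - F s) / (y - s)"
    using eventually_at_left_real[OF s(1)]
    by (rule eventually_mono) (use supergradient_chord_bounds(1)[OF F, of _ s] s in \<open>auto simp: field_simps\<close>)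
  then have "g s \<le> D"
    using q by (intro tendsto_lowerbound[of _ _ "at_left s"]) (auto intro: filterlim_mono simp: at_le)
  ultimately show ?thesis by simp
qed

lemma countable_discont_antimono:
  fixes g :: "real \<Rightarrow> real"
  assumes "antimono_on {0..1} g"
  shows "countable {a\<in>{0<..<1}. \<not> isCont g a}"
proof -
  have "mono_on {0<..<1} (\<lambda>x. - g x)"
    using assms by (auto simp: monotone_on_def)
  moreover have "isCont (\<lambda>x. - g x) a \<longleftrightarrow> isCont g a" for a
    using isCont_minus[of a "\<lambda>x. - g x"] isCont_minus[of a g] by auto
  ultimately show ?thesis
    using mono_on_ctble_discont_open[of "{0<..<1}" "\<lambda>x. - g x"] by simp
qed

lemma partial2_plus_eq:
  assumes F: "supergradient (C v) g" and g: "decr_rcont g" and t: "0 \<le> t" "t < 1"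
  shows "partial2_plus C v t = g t"
proof -
  define A where "A = {s. t < s \<and> C v differentiable (at s)}"
  have "t islimpt A"
    unfolding islimpt_approachable
  proof (intro allI impI)
    fix e :: real assume "0 < e"
    then have "{t<..<min (t + e) 1} \<noteq> {}" using t by auto
    from open_minus_countable[OF countable_discont_antimono[OF decr_rcont_antimono_on[OF g]] this open_greaterThanLessThan]
    obtain x where x: "x \<in> {t<..<min (t + e) 1}" "x \<notin> {a\<in>{0<..<1}. \<not> isCont g a}"
      by blast
    then have "(C v has_real_derivative g x) (at x)"
      using supergradient_has_real_derivative[OF F] t by auto
    then show "\<exists>x'\<in>A. x' \<noteq> t \<and> dist x' t < e"
      using x by (intro bexI[of _ x]) (auto simp: A_def real_differentiable_def dist_real_def)
  qed
  then have nontriv: "\<not> trivial_limit (at t within A)"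
    by (simp add: trivial_limit_within)
  have "\<forall>\<^sub>F s in at t within A. s < 1"
    using order_tendstoD(2)[OF tendsto_ident_at t(2)] .
  moreover have "\<forall>\<^sub>F s in at t within A. s \<in> A"
    by (simp add: eventually_at_filter)
  ultimately have "\<forall>\<^sub>F s in at t within A. g s = deriv (C v) s"
  proof (rule eventually_elim2)
    fix s assume s: "s < 1" "s \<in> A"
    then have "(C v has_real_derivative deriv (C v) s) (at s)"
      by (simp add: A_def DERIV_deriv_iff_real_differentiable)
    then show "g s = deriv (C v) s"
      using supergradient_derivative_eq[OF F] s t by (simp add: A_def)
  qed
  moreover have "(g \<longlongrightarrow> g t) (at t within A)"
    using decr_rcont_right_cont[OF g t] by (rule tendsto_within_subset) (auto simp: A_def)
  ultimately have "(deriv (C v) \<longlongrightarrow> g t) (at t within A)"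
    by (rule Lim_transform_eventually[rotated])
  then show ?thesis
    unfolding partial2_plus_def partial2_def A_def[symmetric] using nontriv by (rule tendsto_Lim[rotated])
qed

lemma integrable_on_antimono_on:
  fixes g :: "real \<Rightarrow> real"
  assumes "antimono_on {a..b} g"
  shows "g integrable_on {a..b}"
proof -
  have "mono_on {a..b} (\<lambda>x. - g x)"
    using assms by (auto simp: monotone_on_def)
  then show ?thesis
    using integrable_neg[OF integrable_on_mono_on] by fastforce
qed

lemma supergradient_integral:
  assumes g: "antimono_on {0..1} g"
  shows "supergradient (\<lambda>s. integral {0..s} g) g"
proof (rule supergradientI)
  fix x y :: real assume xy: "0 \<le> x" "x < y" "y \<le> 1"
  have int: "g integrable_on {x..y}"
    by (rule integrable_on_antimono_on) (use g xy in \<open>auto simp: monotone_on_def\<close>)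
  have "integral {0..y} g = integral {0..x} g + integral {x..y} g"
    using Henstock_Kurzweil_Integration.integral_combine[OF xy(1) _ integrable_on_antimono_on] g xy
    by (auto simp: monotone_on_def)
  moreover have "integral {x..y} g \<le> integral {x..y} (\<lambda>_. g x)"
    using int xy g by (intro integral_le) (auto simp: monotone_on_def)
  moreover have "integral {x..y} (\<lambda>_. g y) \<le> integral {x..y} g"
    using int xy g by (intro integral_le) (auto simp: monotone_on_def)
  ultimately show "(y - x) * g y \<le> integral {0..y} g - integral {0..x} g \<and>
      integral {0..y} g - integral {0..x} g \<le> (y - x) * g x"
    using xy by simp
qed

lemma constant_if_increments_dominated:
  fixes P g :: "real \<Rightarrow> real"
  assumes incr: "\<And>x y. 0 \<le> x \<Longrightarrow> x \<le> y \<Longrightarrow> y \<le> 1 \<Longrightarrow> \<bar>P y - P x\<bar> \<le> (y - x) * (g x - g y)"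
    and u: "0 \<le> u" "u \<le> 1"
  shows "P u = P 0"
proof -
  have bound: "\<bar>P u - P 0\<bar> \<le> u * (g 0 - g u) / real n" if n: "n > 0" for n :: nat
  proof -
    define h where "h = u / real n"
    have h: "0 \<le> h" "real n * h = u" using u n by (auto simp: h_def)
    have grid: "0 \<le> real i * h" "real i * h \<le> 1" if "i \<le> n" for i
      using h u that mult_right_mono[of "real i" "real n" h] by auto
    have "\<bar>P u - P 0\<bar> = \<bar>\<Sum>i<n. P (real (Suc i) * h) - P (real i * h)\<bar>"
      using sum_lessThan_telescope[of "\<lambda>i. P (real i * h)" n] h by simp
    also have "\<dots> \<le> (\<Sum>i<n. \<bar>P (real (Suc i) * h) - P (real i * h)\<bar>)"
      by (rule sum_abs)
    also have "\<dots> \<le> (\<Sum>i<n. h * (g (real i * h) - g (real (Suc i) * h)))"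
    proof (rule sum_mono)
      fix i assume "i \<in> {..<n}"
      then have "0 \<le> real i * h" "real i * h \<le> real (Suc i) * h" "real (Suc i) * h \<le> 1"
        using grid[of i] grid[of "Suc i"] h by (auto intro: mult_right_mono)
      from incr[OF this]
      show "\<bar>P (real (Suc i) * h) - P (real i * h)\<bar> \<le> h * (g (real i * h) - g (real (Suc i) * h))"
        by (simp add: algebra_simps)
    qed
    also have "\<dots> = h * (g 0 - g u)"
      using sum_lessThan_telescope'[of "\<lambda>i. g (real i * h)" n] h
      by (simp add: sum_distrib_left[symmetric])
    finally show ?thesis by (simp add: h_def)
  qed
  have "(\<lambda>n. u * (g 0 - g u) / real n) \<longlonglongrightarrow> 0"
    by (rule lim_const_over_n)
  then have "\<bar>P u - P 0\<bar> \<le> 0"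
    by (rule LIMSEQ_le_const) (use bound in \<open>auto intro!: exI[of _ 1]\<close>)
  then show ?thesis by simp
qed

lemma supergradient_unique:
  assumes F: "supergradient F g" and G: "supergradient G g" and u: "0 \<le> u" "u \<le> 1"
  shows "F u - F 0 = G u - G 0"
proof -
  have "\<bar>(F y - G y) - (F x - G x)\<bar> \<le> (y - x) * (g x - g y)" if xy: "0 \<le> x" "x \<le> y" "y \<le> 1" for x y
  proof (cases "x = y")
    case False
    then have "x < y" using xy by simp
    from supergradient_chord_bounds[OF F xy(1) this xy(3)] supergradient_chord_bounds[OF G xy(1) this xy(3)]
    show ?thesis by (auto simp: abs_le_iff algebra_simps)
  qed simp
  from constant_if_increments_dominated[of "\<lambda>x. F x - G x", OF this u] show ?thesis
    by simp
qed

lemma supergradient_integral_eq: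
  assumes "supergradient F g" "0 \<le> u" "u \<le> 1"
  shows "F u - F 0 = integral {0..u} g"
  using supergradient_unique[OF assms(1) supergradient_integral[OF supergradient_antimono_on[OF assms(1)]] assms(2,3)]
  by simp

section \<open>Generalized inverses\<close>

lemma gen_inv_nonneg: "0 \<le> gen_inv g w"
  and gen_inv_le_one: "gen_inv g w \<le> 1"
  unfolding gen_inv_def by (auto intro!: cInf_greatest cInf_lower bdd_belowI[of _ 0])

lemma gen_inv_antimono: "w1 \<le> w2 \<Longrightarrow> gen_inv g w2 \<le> gen_inv g w1"
  unfolding gen_inv_def by (rule cInf_superset_mono) (auto intro: bdd_belowI[of _ 0])

lemma gen_inv_cong:
  assumes "\<And>t. 0 \<le> t \<Longrightarrow> t < 1 \<Longrightarrow> f t = f' t"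
  shows "gen_inv f = gen_inv f'"
proof
  fix w
  have "{t\<in>{0..1}. f t \<le> w} \<union> {1} = {t\<in>{0..1}. f' t \<le> w} \<union> {1}"
    using assms by (auto simp: le_less)
  then show "gen_inv f w = gen_inv f' w" by (simp add: gen_inv_def)
qed

text \<open>Right-continuity of g is what makes this Galois connection exact.\<close>
lemma gen_inv_less_iff:
  assumes g: "decr_rcont g" and t: "0 \<le> t" "t < 1"
  shows "t < gen_inv g w \<longleftrightarrow> w < g t"
proof
  assume "t < gen_inv g w"
  show "w < g t"
  proof (rule ccontr)
    assume "\<not> w < g t"
    then have "gen_inv g w \<le> t"
      unfolding gen_inv_def using t by (intro cInf_lower) (auto intro: bdd_belowI[of _ 0])
    with \<open>t < gen_inv g w\<close> show False by simp
  qed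
next
  assume wt: "w < g t"
  obtain b where b: "t < b" "\<And>s. t < s \<Longrightarrow> s < b \<Longrightarrow> w < g s"
    using order_tendstoD(1)[OF decr_rcont_right_cont[OF g t] wt]
    unfolding eventually_at_right_field by blast
  have "min b 1 \<le> gen_inv g w"
    unfolding gen_inv_def
  proof (rule cInf_greatest)
    fix e assume e: "e \<in> {s\<in>{0..1}. g s \<le> w} \<union> {1}"
    show "min b 1 \<le> e"
    proof (cases "e = 1")
      case False
      then have e1: "0 \<le> e" "e \<le> 1" "g e \<le> w" using e by auto
      have "t < e"
      proof (rule ccontr)
        assume "\<not> t < e"
        then have "g t \<le> g e" using decr_rcont_antimono[OF g e1(1), of t] t by simp
        then show False using e1 wt by simp
      qed
      then have "b \<le> e" using b(2)[of e] e1 by fastforce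
      then show ?thesis by simp
    qed simp
  qed simp
  then show "t < gen_inv g w" using b(1) t by simp
qed

lemma decr_rcont_gen_inv:
  assumes g: "decr_rcont g"
  shows "decr_rcont (gen_inv g)"
  unfolding decr_rcont_def
proof (intro conjI ballI)
  show "antimono_on {0..1} (gen_inv g)"
    by (intro monotone_onI gen_inv_antimono)
  show "gen_inv g ` {0..1} \<subseteq> {0..1}"
    using gen_inv_nonneg gen_inv_le_one by auto
next
  fix w :: real assume "w \<in> {0..<1}"
  show "(gen_inv g \<longlongrightarrow> gen_inv g w) (at_right w)"
    unfolding order_tendsto_iff
  proof (intro conjI allI impI)
    fix a assume a: "gen_inv g w < a"
    show "\<forall>\<^sub>F s in at_right w. gen_inv g s < a"
      using eventually_at_right_less[of w]
    proof (rule eventually_mono)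
      fix s assume "w < s"
      then show "gen_inv g s < a" using gen_inv_antimono[of w s g] a by simp
    qed
  next
    fix a assume a: "a < gen_inv g w"
    show "\<forall>\<^sub>F s in at_right w. a < gen_inv g s"
    proof (cases "a < 0")
      case True
      then show ?thesis by (intro always_eventually) (auto intro: less_le_trans gen_inv_nonneg)
    next
      case False
      then have t: "0 \<le> a" "a < 1" using a gen_inv_le_one[of g w] by auto
      have "w < g a" using gen_inv_less_iff[OF g t] a by simp
      from order_tendstoD(2)[OF tendsto_ident_at this]
      show ?thesis
        by (rule eventually_mono) (use gen_inv_less_iff[OF g t] in auto)
    qed
  qed
qed

lemma gen_inv_gen_inv:
  assumes g: "decr_rcont g" and t: "0 \<le> t" "t < 1"
  shows "gen_inv (gen_inv g) t = g t"
proof -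
  have "{w\<in>{0..1}. gen_inv g w \<le> t} \<union> {1} = {g t..1}"
  proof (rule set_eqI)
    fix w
    have "gen_inv g w \<le> t \<longleftrightarrow> g t \<le> w"
      using gen_inv_less_iff[OF g t, of w] by linarith
    then show "w \<in> {w\<in>{0..1}. gen_inv g w \<le> t} \<union> {1} \<longleftrightarrow> w \<in> {g t..1}"
      using decr_rcont_bounds[OF g, of t] t by auto
  qed
  then show ?thesis
    using decr_rcont_bounds[OF g, of t] t by (simp add: gen_inv_def)
qed

lemma gen_inv_zero:
  assumes "0 \<le> w"
  shows "gen_inv (\<lambda>_. 0) w = 0"
proof -
  have "{t\<in>{0..1}. (0::real) \<le> w} \<union> {1} = {0..1::real}" using assms by auto
  then show ?thesis by (simp add: gen_inv_def)
qed

lemma borel_measurable_gen_inv: "gen_inv g \<in> borel_measurable borel"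
proof -
  have "mono (\<lambda>w. - gen_inv g w)"
    by (auto intro!: monoI gen_inv_antimono)
  then have "(\<lambda>w. - gen_inv g w) \<in> borel_measurable borel"
    by (rule borel_measurable_mono)
  then show ?thesis by simp
qed

definition hypograph_symdiff :: "(real \<Rightarrow> real) \<Rightarrow> (real \<Rightarrow> real) \<Rightarrow> (real \<times> real) set" where
  "hypograph_symdiff c d = {(t, w). t \<in> {0..<1} \<and> w \<in> {0..<1} \<and> (w < c t) \<noteq> (w < d t)}"

lemma hypograph_symdiff_sets:
  assumes [measurable]: "c \<in> borel_measurable borel" "d \<in> borel_measurable borel"
  shows "hypograph_symdiff c d \<in> sets (lborel \<Otimes>\<^sub>M lborel)"
proof -
  have "hypograph_symdiff c d = {x \<in> space (lborel \<Otimes>\<^sub>M lborel). fst x \<in> {0..<1} \<and> snd x \<in> {0..<1} \<and>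
      ((snd x < c (fst x) \<and> \<not> snd x < d (fst x)) \<or> (\<not> snd x < c (fst x) \<and> snd x < d (fst x)))}"
    by (auto simp: hypograph_symdiff_def space_pair_measure)
  also have "\<dots> \<in> sets (lborel \<Otimes>\<^sub>M lborel)"
    by measurable
  finally show ?thesis .
qed

lemma nn_integral_abs_diff_hypograph_symdiff:
  assumes "\<And>t. t \<in> {0..<1} \<Longrightarrow> c t \<in> {0..1} \<and> d t \<in> {0..1}"
  shows "(\<integral>\<^sup>+t\<in>{0..<1}. ennreal \<bar>c t - d t\<bar> \<partial>lborel)
       = (\<integral>\<^sup>+t. \<integral>\<^sup>+w. indicator (hypograph_symdiff c d) (t, w) \<partial>lborel \<partial>lborel)"
proof (rule nn_integral_cong)
  fix t :: real
  show "ennreal \<bar>c t - d t\<bar> * indicator {0..<1} t = (\<integral>\<^sup>+w. indicator (hypograph_symdiff c d) (t, w) \<partial>lborel)"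
  proof (cases "t \<in> {0..<1}")
    case True
    have "(\<lambda>w. indicator (hypograph_symdiff c d) (t, w) :: ennreal) = indicator {min (c t) (d t)..<max (c t) (d t)}"
      using True assms[OF True] by (auto simp: hypograph_symdiff_def indicator_def fun_eq_iff)
    then show ?thesis
      using True by (simp add: abs_real_def min_def max_def)
  next
    case False
    then have "(\<lambda>w. indicator (hypograph_symdiff c d) (t, w) :: ennreal) = (\<lambda>_. 0)"
      by (auto simp: hypograph_symdiff_def)
    then show ?thesis using False by simp
  qed
qed

lemma hypograph_symdiff_gen_inv:
  assumes "decr_rcont a" "decr_rcont b"
  shows "(t, w) \<in> hypograph_symdiff a b \<longleftrightarrow> (w, t) \<in> hypograph_symdiff (gen_inv a) (gen_inv b)"
  using gen_inv_less_iff[OF assms(1), of t w] gen_inv_less_iff[OF assms(2), of t w]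
  unfolding hypograph_symdiff_def by auto

text \<open>Both sides measure the region between the graphs of a and b; reflecting it in the
  diagonal turns it into the region between the graphs of the generalized inverses.\<close>
lemma nn_integral_abs_diff_gen_inv:
  assumes a: "decr_rcont a" and b: "decr_rcont b"
    and [measurable]: "a \<in> borel_measurable borel" "b \<in> borel_measurable borel"
  shows "(\<integral>\<^sup>+t\<in>{0..1}. ennreal \<bar>a t - b t\<bar> \<partial>lborel)
       = (\<integral>\<^sup>+w\<in>{0..1}. ennreal \<bar>gen_inv a w - gen_inv b w\<bar> \<partial>lborel)"
proof -
  have half_open: "(\<integral>\<^sup>+x\<in>{0..1}. f x \<partial>lborel) = (\<integral>\<^sup>+x\<in>{0..<1}. f x \<partial>lborel)" for f :: "real \<Rightarrow> ennreal"
    by (rule nn_integral_cong_AE)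
      (use AE_lborel_singleton[of 1] in \<open>auto elim!: eventually_mono simp: indicator_def\<close>)
  have [measurable]: "gen_inv a \<in> borel_measurable borel" "gen_inv b \<in> borel_measurable borel"
    by (rule borel_measurable_gen_inv)+
  have "(\<integral>\<^sup>+t\<in>{0..<1}. ennreal \<bar>a t - b t\<bar> \<partial>lborel)
      = (\<integral>\<^sup>+t. \<integral>\<^sup>+w. indicator (hypograph_symdiff a b) (t, w) \<partial>lborel \<partial>lborel)"
    by (rule nn_integral_abs_diff_hypograph_symdiff) (use decr_rcont_bounds[OF a] decr_rcont_bounds[OF b] in auto)
  also have "\<dots> = (\<integral>\<^sup>+w. \<integral>\<^sup>+t. indicator (hypograph_symdiff a b) (t, w) \<partial>lborel \<partial>lborel)"
    using hypograph_symdiff_sets[of a b] by (intro lborel_pair.Fubini'[symmetric]) simp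
  also have "\<dots> = (\<integral>\<^sup>+w. \<integral>\<^sup>+t. indicator (hypograph_symdiff (gen_inv a) (gen_inv b)) (w, t) \<partial>lborel \<partial>lborel)"
    unfolding indicator_def using hypograph_symdiff_gen_inv[OF a b] by simp
  also have "\<dots> = (\<integral>\<^sup>+w\<in>{0..<1}. ennreal \<bar>gen_inv a w - gen_inv b w\<bar> \<partial>lborel)"
    by (rule nn_integral_abs_diff_hypograph_symdiff[symmetric]) (auto intro: gen_inv_nonneg gen_inv_le_one)
  finally show ?thesis by (simp only: half_open)
qed

section \<open>Right derivatives of concave functions\<close>

definition chord_slopes_01 :: "(real \<Rightarrow> real) \<Rightarrow> bool" where
  "chord_slopes_01 f \<longleftrightarrow> (\<forall>x y. 0 \<le> x \<longrightarrow> x \<le> y \<longrightarrow> y \<le> 1 \<longrightarrow> 0 \<le> f y - f x \<and> f y - f x \<le> y - x)"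

lemma chord_slopes_01D:
  "chord_slopes_01 f \<Longrightarrow> 0 \<le> x \<Longrightarrow> x \<le> y \<Longrightarrow> y \<le> 1 \<Longrightarrow> 0 \<le> f y - f x \<and> f y - f x \<le> y - x"
  unfolding chord_slopes_01_def by blast

lemma chord_slopes_01_bdd_above:
  assumes "chord_slopes_01 f" "0 \<le> t"
  shows "bdd_above ((\<lambda>y. (f y - f t) / (y - t)) ` {t<..1})"
  using chord_slopes_01D[OF assms] by (intro bdd_aboveI[of _ 1]) auto

lemma chord_slopes_01_tendsto_right:
  assumes f: "chord_slopes_01 f" and t: "0 \<le> t" "t < 1"
  shows "(f \<longlongrightarrow> f t) (at_right t)"
proof (rule tendsto_sandwich[of "\<lambda>_. f t" _ _ "\<lambda>s. f t + (s - t)"])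
  have "f t \<le> f s \<and> f s \<le> f t + (s - t)" if "s \<in> {t<..<1}" for s
    using chord_slopes_01D[OF f t(1), of s] that by auto
  then show "\<forall>\<^sub>F s in at_right t. f t \<le> f s" "\<forall>\<^sub>F s in at_right t. f s \<le> f t + (s - t)"
    using eventually_at_right_real[OF t(2)] by (auto elim: eventually_mono)
  have "((\<lambda>s. f t + (s - t)) \<longlongrightarrow> f t + (t - t)) (at_right t)"
    by (intro tendsto_intros)
  then show "((\<lambda>s. f t + (s - t)) \<longlongrightarrow> f t) (at_right t)" by simp
qed simp

lemma concave_on_chord_slopes:
  fixes f :: "real \<Rightarrow> real"
  assumes f: "concave_on {0..1} f" and xmy: "0 \<le> x" "x < m" "m < y" "y \<le> 1"
  shows "(f y - f x) / (y - x) \<le> (f m - f x) / (m - x)"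
    and "(f y - f m) / (y - m) \<le> (f y - f x) / (y - x)"
proof -
  have "convex_on {0..1} (\<lambda>x. - f x)" using f by (simp add: concave_on_def)
  note slopes = convex_on_slope_le[OF this, of x y m]
  show "(f y - f x) / (y - x) \<le> (f m - f x) / (m - x)"
    using slopes(1) xmy by (simp add: field_simps)
  show "(f y - f m) / (y - m) \<le> (f y - f x) / (y - x)"
    using slopes(2) xmy by (simp add: field_simps)
qed

definition clamp01 :: "real \<Rightarrow> real" where
  "clamp01 x = max 0 (min 1 x)"

lemma clamp01_id [simp]: "0 \<le> x \<Longrightarrow> x \<le> 1 \<Longrightarrow> clamp01 x = x"
  by (simp add: clamp01_def)

lemma clamp01_bounds [simp]: "0 \<le> clamp01 x" "clamp01 x \<le> 1"
  by (auto simp: clamp01_def)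

text \<open>A sequential limit, rather than a filter limit, so that the right derivative of a
  jointly continuous function is jointly measurable; the clamping makes it vanish at 1.\<close>
definition right_deriv :: "(real \<Rightarrow> real) \<Rightarrow> real \<Rightarrow> real" where
  "right_deriv f t = lim (\<lambda>n. (f (clamp01 (t + 1 / real (Suc n))) - f (clamp01 t)) * real (Suc n))"

lemma right_deriv_one: "right_deriv f 1 = 0"
  unfolding right_deriv_def by (simp add: clamp01_def)

lemma concave_on_chord_slopes_tendsto_SUP:
  assumes f: "concave_on {0..1} f" "chord_slopes_01 f" and t: "0 \<le> t" "t < 1"
  shows "(\<lambda>n. (f (t + 1 / real (Suc n)) - f t) / (1 / real (Suc n)))
           \<longlonglongrightarrow> (SUP y\<in>{t<..1}. (f y - f t) / (y - t))"
proof -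
  define q where "q y = (f y - f t) / (y - t)" for y
  define S where "S = (SUP y\<in>{t<..1}. q y)"
  have bdd: "bdd_above (q ` {t<..1})"
    unfolding q_def by (rule chord_slopes_01_bdd_above[OF f(2) t(1)])
  have step_to_0: "(\<lambda>n. 1 / real (Suc n)) \<longlonglongrightarrow> 0"
    using LIMSEQ_Suc[OF lim_inverse_n'] by simp
  have "(\<lambda>n. q (t + 1 / real (Suc n))) \<longlonglongrightarrow> S"
  proof (rule order_tendstoI)
    fix a assume "a < S"
    then obtain y where y: "y \<in> {t<..1}" "a < q y"
      unfolding S_def using less_cSUP_iff[OF _ bdd] t by auto
    have "\<forall>\<^sub>F n in sequentially. 1 / real (Suc n) < y - t"
      using order_tendstoD(2)[OF step_to_0, of "y - t"] y by simp
    then show "\<forall>\<^sub>F n in sequentially. a < q (t + 1 / real (Suc n))"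
    proof (rule eventually_mono)
      fix n assume "1 / real (Suc n) < y - t"
      then have "q y \<le> q (t + 1 / real (Suc n))"
        using concave_on_chord_slopes(1)[OF f(1) t(1), of "t + 1 / real (Suc n)" y] y
        by (simp add: q_def)
      then show "a < q (t + 1 / real (Suc n))" using y by simp
    qed
  next
    fix a assume "S < a"
    have "\<forall>\<^sub>F n in sequentially. 1 / real (Suc n) < 1 - t"
      using order_tendstoD(2)[OF step_to_0, of "1 - t"] t by simp
    then show "\<forall>\<^sub>F n in sequentially. q (t + 1 / real (Suc n)) < a"
    proof (rule eventually_mono)
      fix n assume "1 / real (Suc n) < 1 - t"
      then have "q (t + 1 / real (Suc n)) \<le> S"
        unfolding S_def by (intro cSUP_upper[OF _ bdd]) simp
      then show "q (t + 1 / real (Suc n)) < a" using \<open>S < a\<close> by simp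
    qed
  qed
  then show ?thesis by (simp add: q_def S_def)
qed

lemma right_deriv_eq_SUP:
  assumes f: "concave_on {0..1} f" "chord_slopes_01 f" and t: "0 \<le> t" "t < 1"
  shows "right_deriv f t = (SUP y\<in>{t<..1}. (f y - f t) / (y - t))"
proof -
  have "\<forall>\<^sub>F n in sequentially. t + 1 / real (Suc n) \<le> 1"
    using order_tendstoD(2)[OF LIMSEQ_Suc[OF lim_inverse_n'], of "1 - t"] t by (auto elim: eventually_mono)
  then have "\<forall>\<^sub>F n in sequentially. (f (t + 1 / real (Suc n)) - f t) / (1 / real (Suc n))
      = (f (clamp01 (t + 1 / real (Suc n))) - f (clamp01 t)) * real (Suc n)"
    by (rule eventually_mono) (use t in simp)
  from Lim_transform_eventually[OF concave_on_chord_slopes_tendsto_SUP[OF f t] this]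
  show ?thesis
    unfolding right_deriv_def by (rule limI)
qed

lemma right_deriv_ge_chord:
  assumes f: "concave_on {0..1} f" "chord_slopes_01 f" and ty: "0 \<le> t" "t < y" "y \<le> 1"
  shows "(f y - f t) / (y - t) \<le> right_deriv f t"
  unfolding right_deriv_eq_SUP[OF f ty(1) order.strict_trans2[OF ty(2,3)]]
  using chord_slopes_01_bdd_above[OF f(2) ty(1)] ty by (intro cSUP_upper) auto

lemma right_deriv_le_chord:
  assumes f: "concave_on {0..1} f" "chord_slopes_01 f" and xt: "0 \<le> x" "x < t" "t < 1"
  shows "right_deriv f t \<le> (f t - f x) / (t - x)"
  unfolding right_deriv_eq_SUP[OF f order.trans[OF xt(1) less_imp_le[OF xt(2)]] xt(3)]
proof (rule cSUP_least)
  fix y assume "y \<in> {t<..1}"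
  then show "(f y - f t) / (y - t) \<le> (f t - f x) / (t - x)"
    using concave_on_chord_slopes[OF f(1) xt(1,2), of y] by simp
qed (use xt in simp)

lemma right_deriv_bounds:
  assumes f: "concave_on {0..1} f" "chord_slopes_01 f" and t: "0 \<le> t" "t \<le> 1"
  shows "0 \<le> right_deriv f t \<and> right_deriv f t \<le> 1"
proof (cases "t = 1")
  case False
  then have t1: "t < 1" using t by simp
  have "0 \<le> (f 1 - f t) / (1 - t)"
    using chord_slopes_01D[OF f(2) t(1), of 1] t1 by simp
  also have "\<dots> \<le> right_deriv f t"
    by (rule right_deriv_ge_chord[OF f t(1) t1]) simp
  finally show ?thesis
    unfolding right_deriv_eq_SUP[OF f t(1) t1]
    using chord_slopes_01D[OF f(2) t(1)] t1 by (auto intro!: cSUP_least)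
qed (simp add: right_deriv_one)

lemma supergradient_right_deriv:
  assumes f: "concave_on {0..1} f" "chord_slopes_01 f"
  shows "supergradient f (right_deriv f)"
proof (rule supergradientI)
  fix x y :: real assume xy: "0 \<le> x" "x < y" "y \<le> 1"
  have "(y - x) * right_deriv f y \<le> f y - f x"
  proof (cases "y = 1")
    case True
    then show ?thesis using chord_slopes_01D[OF f(2) xy(1), of y] xy by (simp add: right_deriv_one)
  next
    case False
    then show ?thesis using right_deriv_le_chord[OF f xy(1,2)] xy by (simp add: field_simps)
  qed
  moreover have "f y - f x \<le> (y - x) * right_deriv f x"
    using right_deriv_ge_chord[OF f xy] xy by (simp add: field_simps)
  ultimately show "(y - x) * right_deriv f y \<le> f y - f x \<and> f y - f x \<le> (y - x) * right_deriv f x" ..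
qed

lemma decr_rcont_right_deriv:
  assumes f: "concave_on {0..1} f" "chord_slopes_01 f"
  shows "decr_rcont (right_deriv f)"
  unfolding decr_rcont_def
proof (intro conjI ballI)
  show anti: "antimono_on {0..1} (right_deriv f)"
    by (rule supergradient_antimono_on[OF supergradient_right_deriv[OF f]])
  show "right_deriv f ` {0..1} \<subseteq> {0..1}"
    using right_deriv_bounds[OF f] by auto
  fix t :: real assume "t \<in> {0..<1}"
  then have t: "0 \<le> t" "t < 1" by auto
  have near: "\<forall>\<^sub>F s in at_right t. s \<in> {t<..<1}"
    using eventually_at_right_real[OF t(2)] .
  show "(right_deriv f \<longlongrightarrow> right_deriv f t) (at_right t)"
    unfolding order_tendsto_iff
  proof (intro conjI allI impI)
    fix a assume a: "right_deriv f t < a"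
    show "\<forall>\<^sub>F s in at_right t. right_deriv f s < a"
      using near
    proof (rule eventually_mono)
      fix s assume "s \<in> {t<..<1}"
      then have "right_deriv f s \<le> right_deriv f t"
        using anti t by (auto simp: monotone_on_def)
      then show "right_deriv f s < a" using a by simp
    qed
  next
    fix a assume "a < right_deriv f t"
    then obtain y where y: "t < y" "y \<le> 1" "a < (f y - f t) / (y - t)"
      unfolding right_deriv_eq_SUP[OF f t]
      using less_cSUP_iff[OF _ chord_slopes_01_bdd_above[OF f(2) t(1)]] t by auto
    have "((\<lambda>s. (f y - f s) / (y - s)) \<longlongrightarrow> (f y - f t) / (y - t)) (at_right t)"
      using chord_slopes_01_tendsto_right[OF f(2) t] y by (intro tendsto_intros) auto
    from order_tendstoD(1)[OF this y(3)] eventually_at_right_real[OF y(1)]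
    show "\<forall>\<^sub>F s in at_right t. a < right_deriv f s"
    proof (rule eventually_elim2)
      fix s assume "a < (f y - f s) / (y - s)" "s \<in> {t<..<y}"
      then show "a < right_deriv f s"
        using right_deriv_ge_chord[OF f, of s y] t y by fastforce
    qed
  qed
qed

section \<open>Copulas and the operator S\<close>

lemma copula_2_increasing:
  assumes "copula C" "0 \<le> u1" "u1 \<le> u2" "u2 \<le> 1" "0 \<le> v1" "v1 \<le> v2" "v2 \<le> 1"
  shows "C u2 v2 - C u2 v1 - C u1 v2 + C u1 v1 \<ge> 0"
  using assms unfolding copula_def by blast

lemma copula_boundary:
  assumes "copula C" "0 \<le> u" "u \<le> 1"
  shows "C u 0 = 0" "C 0 u = 0" "C u 1 = u" "C 1 u = u"
  using assms unfolding copula_def by auto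

lemma copula_chord_slopes_01:
  assumes C: "copula C" and u: "0 \<le> u" "u \<le> 1"
  shows "chord_slopes_01 (C u)"
  unfolding chord_slopes_01_def
proof (intro allI impI conjI)
  fix x y :: real assume xy: "0 \<le> x" "x \<le> y" "y \<le> 1"
  show "0 \<le> C u y - C u x"
    using copula_2_increasing[OF C, of 0 u x y] copula_boundary[OF C, of x] copula_boundary[OF C, of y] u xy
    by auto
  show "C u y - C u x \<le> y - x"
    using copula_2_increasing[OF C, of u 1 x y] copula_boundary[OF C, of x] copula_boundary[OF C, of y] u xy
    by auto
qed

lemma copula_lipschitz:
  assumes C: "copula C" and "u1 \<in> {0..1}" "u2 \<in> {0..1}" "v1 \<in> {0..1}" "v2 \<in> {0..1}"
  shows "\<bar>C u1 v1 - C u2 v2\<bar> \<le> \<bar>u1 - u2\<bar> + \<bar>v1 - v2\<bar>"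
proof -
  have fst: "\<bar>C x v1 - C y v1\<bar> \<le> \<bar>x - y\<bar>" if "0 \<le> x" "x \<le> y" "y \<le> 1" for x y
    using copula_2_increasing[OF C, of x y 0 v1] copula_2_increasing[OF C, of x y v1 1]
      copula_boundary[OF C, of x] copula_boundary[OF C, of y] that assms by auto
  have snd: "\<bar>C u2 x - C u2 y\<bar> \<le> \<bar>x - y\<bar>" if "0 \<le> x" "x \<le> y" "y \<le> 1" for x y
    using chord_slopes_01D[OF copula_chord_slopes_01[OF C, of u2] that] assms by auto
  have "\<bar>C u1 v1 - C u2 v1\<bar> \<le> \<bar>u1 - u2\<bar>"
    using fst[of u1 u2] fst[of u2 u1] assms by (cases "u1 \<le> u2") (auto simp: abs_minus_commute)
  moreover have "\<bar>C u2 v1 - C u2 v2\<bar> \<le> \<bar>v1 - v2\<bar>"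
    using snd[of v1 v2] snd[of v2 v1] assms by (cases "v1 \<le> v2") (auto simp: abs_minus_commute)
  ultimately show ?thesis by linarith
qed

lemma SI_copula_section:
  assumes D: "SI_copula D" and v: "0 \<le> v" "v \<le> 1"
  shows "supergradient (D v) (right_deriv (D v))" "decr_rcont (right_deriv (D v))"
proof -
  have "copula D" "concave_on {0..1} (D v)"
    using D v unfolding SI_copula_def by auto
  then have f: "concave_on {0..1} (D v)" "chord_slopes_01 (D v)"
    using copula_chord_slopes_01 v by auto
  show "supergradient (D v) (right_deriv (D v))" by (rule supergradient_right_deriv[OF f])
  show "decr_rcont (right_deriv (D v))" by (rule decr_rcont_right_deriv[OF f])
qed

lemma S_op_eq_integral:
  assumes D: "SI_copula D" and v: "0 \<le> v" "v \<le> 1"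
  shows "S_op D v = (\<lambda>u. integral {0..u} (gen_inv (right_deriv (D v))))"
proof -
  have "gen_inv (partial2_plus D v) = gen_inv (right_deriv (D v))"
    by (rule gen_inv_cong) (rule partial2_plus_eq[where C = D and v = v, OF SI_copula_section[OF D v]])
  then show ?thesis by (simp add: S_op_def[abs_def])
qed

lemma S_op_section:
  assumes D: "SI_copula D" and v: "0 \<le> v" "v \<le> 1"
  shows "supergradient (S_op D v) (gen_inv (right_deriv (D v)))" "decr_rcont (gen_inv (right_deriv (D v)))"
proof -
  show g: "decr_rcont (gen_inv (right_deriv (D v)))"
    by (rule decr_rcont_gen_inv[OF SI_copula_section(2)[OF D v]])
  show "supergradient (S_op D v) (gen_inv (right_deriv (D v)))"
    unfolding S_op_eq_integral[OF D v] by (rule supergradient_integral[OF decr_rcont_antimono_on[OF g]])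
qed

theorem S_op_S_op:
  assumes D: "SI_copula D" and v: "0 \<le> v" "v \<le> 1" and u: "0 \<le> u" "u \<le> 1"
  shows "S_op (S_op D) v u = D v u"
proof -
  note g = SI_copula_section[OF D v]
  have "gen_inv (partial2_plus (S_op D) v) = gen_inv (gen_inv (right_deriv (D v)))"
    by (rule gen_inv_cong) (rule partial2_plus_eq[where C = "S_op D" and v = v, OF S_op_section[OF D v]])
  then have "S_op (S_op D) v u = integral {0..u} (gen_inv (gen_inv (right_deriv (D v))))"
    by (simp add: S_op_def)
  also have "\<dots> = integral {0..u} (right_deriv (D v))"
    by (rule integral_spike[of "{1}"]) (use u gen_inv_gen_inv[OF g(2)] in \<open>auto simp: less_le\<close>)
  also have "\<dots> = D v u - D v 0"
    by (rule supergradient_integral_eq[OF g(1) u, symmetric])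
  also have "\<dots> = D v u"
    using D v copula_boundary(1) by (simp add: SI_copula_def)
  finally show ?thesis .
qed

section \<open>Almost-everywhere partial derivatives\<close>

text \<open>Clamping the first coordinate makes these jointly measurable, although C is arbitrary
  off the unit square.\<close>
definition partial2_right :: "(real \<Rightarrow> real \<Rightarrow> real) \<Rightarrow> real \<times> real \<Rightarrow> real" where
  "partial2_right C x = right_deriv (C (clamp01 (fst x))) (snd x)"

definition partial2_right_inv :: "(real \<Rightarrow> real \<Rightarrow> real) \<Rightarrow> real \<times> real \<Rightarrow> real" where
  "partial2_right_inv C x = gen_inv (right_deriv (C (clamp01 (fst x)))) (snd x)"

lemma continuous_on_copula_clamp01:
  assumes C: "copula C"
  shows "continuous_on UNIV (\<lambda>x::real \<times> real. C (clamp01 (fst x)) (clamp01 (snd x)))"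
proof (rule lipschitz_on_continuous_on)
  have clamp01_abs_diff: "\<bar>clamp01 a - clamp01 b\<bar> \<le> dist a b" for a b
    unfolding clamp01_def dist_real_def by (auto simp: max_def min_def abs_if)
  show "2-lipschitz_on UNIV (\<lambda>x::real \<times> real. C (clamp01 (fst x)) (clamp01 (snd x)))"
  proof (rule lipschitz_onI)
    fix x y :: "real \<times> real"
    have "\<bar>C (clamp01 (fst x)) (clamp01 (snd x)) - C (clamp01 (fst y)) (clamp01 (snd y))\<bar>
        \<le> \<bar>clamp01 (fst x) - clamp01 (fst y)\<bar> + \<bar>clamp01 (snd x) - clamp01 (snd y)\<bar>"
      by (rule copula_lipschitz[OF C]) simp_all
    also have "\<dots> \<le> dist (fst x) (fst y) + dist (snd x) (snd y)"
      by (intro add_mono clamp01_abs_diff)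
    also have "\<dots> \<le> 2 * dist x y"
      using dist_fst_le[of x y] dist_snd_le[of x y] by simp
    finally show "dist (C (clamp01 (fst x)) (clamp01 (snd x))) (C (clamp01 (fst y)) (clamp01 (snd y))) \<le> 2 * dist x y"
      by (simp add: dist_real_def)
  qed simp
qed

lemma borel_measurable_partial2_right:
  assumes C: "copula C"
  shows "partial2_right C \<in> borel_measurable borel"
  unfolding partial2_right_def[abs_def] right_deriv_def
proof (rule borel_measurable_lim_metric)
  fix n :: nat
  have "continuous_on UNIV (\<lambda>x::real \<times> real. (fst x, snd x + 1 / real (Suc n)))"
    by (intro continuous_intros)
  from continuous_on_compose2[OF continuous_on_copula_clamp01[OF C] this]
  have "continuous_on UNIV (\<lambda>x::real \<times> real. C (clamp01 (fst x)) (clamp01 (snd x + 1 / real (Suc n))))"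
    by simp
  then have "continuous_on UNIV (\<lambda>x::real \<times> real.
      (C (clamp01 (fst x)) (clamp01 (snd x + 1 / real (Suc n))) - C (clamp01 (fst x)) (clamp01 (snd x))) * real (Suc n))"
    using continuous_on_copula_clamp01[OF C] by (auto intro!: continuous_intros)
  then show "(\<lambda>x. (C (clamp01 (fst x)) (clamp01 (snd x + 1 / real (Suc n))) - C (clamp01 (fst x)) (clamp01 (snd x))) * real (Suc n))
      \<in> borel_measurable borel"
    by (rule borel_measurable_continuous_onI)
qed

lemma partial2_right_section: "0 \<le> u \<Longrightarrow> u \<le> 1 \<Longrightarrow> (\<lambda>t. partial2_right C (u, t)) = right_deriv (C u)"
  by (simp add: partial2_right_def)

lemma partial2_right_inv_section: "0 \<le> u \<Longrightarrow> u \<le> 1 \<Longrightarrow> (\<lambda>t. partial2_right_inv C (u, t)) = gen_inv (right_deriv (C u))"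
  by (simp add: partial2_right_inv_def)

lemma borel_measurable_partial2_right_inv:
  assumes D: "SI_copula D"
  shows "partial2_right_inv D \<in> borel_measurable borel"
  unfolding borel_measurable_iff_greater
proof
  fix a :: real
  have "copula D" using D by (simp add: SI_copula_def)
  have "(\<lambda>x::real \<times> real. (fst x, a)) \<in> borel_measurable borel"
    by (intro borel_measurable_continuous_onI continuous_intros)
  from measurable_compose[OF this borel_measurable_partial2_right[OF \<open>copula D\<close>]]
  have a_section: "(\<lambda>x::real \<times> real. partial2_right D (fst x, a)) \<in> borel_measurable borel"
    by simp
  have snd: "(\<lambda>x::real \<times> real. snd x) \<in> borel_measurable borel"
    by (intro borel_measurable_continuous_onI continuous_intros)
  consider "a < 0" | "0 \<le> a" "a < 1" | "1 \<le> a" by linarith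
  then show "{x \<in> space borel. a < partial2_right_inv D x} \<in> sets borel"
  proof cases
    case 1
    then have "{x \<in> space borel. a < partial2_right_inv D x} = UNIV"
      using gen_inv_nonneg by (auto simp: partial2_right_inv_def intro: less_le_trans)
    then show ?thesis by simp
  next
    case 2
    have g: "decr_rcont (right_deriv (D (clamp01 u)))" for u
      using SI_copula_section(2)[OF D] by simp
    have "{x \<in> space borel. a < partial2_right_inv D x} = {x \<in> space borel. snd x < partial2_right D (fst x, a)}"
      using gen_inv_less_iff[OF g 2] by (auto simp: partial2_right_inv_def partial2_right_def)
    also have "\<dots> \<in> sets borel"
      by (rule borel_measurable_less[OF snd a_section])
    finally show ?thesis .
  next
    case 3
    then have "{x \<in> space borel. a < partial2_right_inv D x} = {}"
      using gen_inv_le_one by (auto simp: partial2_right_inv_def not_less intro: order.trans)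
    then show ?thesis by (simp only:) simp
  qed
qed

text \<open>Continuity of a section at v is tested along the sequence v - v/(n+2), which keeps
  the exceptional set of the next lemma measurable.\<close>
lemma isCont_iff_left_sequence:
  assumes g: "decr_rcont g" and v: "0 < v" "v < 1"
  shows "isCont g v \<longleftrightarrow> g v = lim (\<lambda>n. g (v - v / real (n + 2)))"
proof
  define x where "x n = v - v / real (n + 2)" for n
  have "(\<lambda>n. v / real (n + 2)) \<longlonglongrightarrow> 0"
    using LIMSEQ_ignore_initial_segment[OF lim_const_over_n[of v], of 2] by simp
  then have x_to_v: "x \<longlonglongrightarrow> v"
    unfolding x_def using tendsto_diff[OF tendsto_const, of _ 0 sequentially v] by simp
  {
    assume "isCont g v"
    then have "(\<lambda>n. g (x n)) \<longlonglongrightarrow> g v"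
      by (rule isCont_tendsto_compose[OF _ x_to_v])
    then show "g v = lim (\<lambda>n. g (x n))"
      by (rule limI[symmetric])
  }
  assume lim: "g v = lim (\<lambda>n. g (x n))"
  have x: "0 < x n" "x n < v" "x n \<le> x (Suc n)" for n
    using v by (auto simp: x_def field_simps intro: add_pos_nonneg)
  have "decseq (\<lambda>n. g (x n))"
  proof (rule decseq_SucI)
    fix n
    show "g (x (Suc n)) \<le> g (x n)"
      using x[of n] x[of "Suc n"] v by (intro decr_rcont_antimono[OF g]) auto
  qed
  moreover have bdd: "bdd_below (range (\<lambda>n. g (x n)))"
  proof (rule bdd_belowI)
    fix y assume "y \<in> range (\<lambda>n. g (x n))"
    then obtain n where "y = g (x n)" by blast
    then show "g v \<le> y"
      using x[of n] v by (auto intro!: decr_rcont_antimono[OF g])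
  qed
  ultimately have "(\<lambda>n. g (x n)) \<longlonglongrightarrow> (INF n. g (x n))"
    by (intro LIMSEQ_decseq_INF)
  with lim have inf: "(INF n. g (x n)) = g v"
    by (simp add: limI)
  have "(g \<longlongrightarrow> g v) (at_left v)"
    unfolding order_tendsto_iff
  proof (intro conjI allI impI)
    fix a assume a: "a < g v"
    show "\<forall>\<^sub>F s in at_left v. a < g s"
      using eventually_at_left_real[OF v(1)]
    proof (rule eventually_mono)
      fix s assume "s \<in> {0<..<v}"
      then have "g v \<le> g s"
        using v by (intro decr_rcont_antimono[OF g]) auto
      then show "a < g s" using a by simp
    qed
  next
    fix a assume "g v < a"
    then obtain n where n: "g (x n) < a"
      using cINF_less_iff[OF _ bdd] inf by auto
    show "\<forall>\<^sub>F s in at_left v. g s < a"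
      using eventually_at_left_real[OF x(2)[of n]]
    proof (rule eventually_mono)
      fix s assume "s \<in> {x n<..<v}"
      then have "g s \<le> g (x n)"
        using x[of n] v by (intro decr_rcont_antimono[OF g]) auto
      then show "g s < a" using n by simp
    qed
  qed
  then have "(g \<longlongrightarrow> g v) (at v)"
    using decr_rcont_right_cont[OF g] v by (intro filterlim_split_at) auto
  then show "isCont g v"
    by (simp add: isCont_def)
qed

lemma AE_isCont_sections:
  fixes g :: "real \<times> real \<Rightarrow> real"
  assumes g: "g \<in> borel_measurable borel"
    and sections: "\<And>u. 0 \<le> u \<Longrightarrow> u \<le> 1 \<Longrightarrow> decr_rcont (\<lambda>t. g (u, t))"
  shows "AE x in lborel. x \<in> {0..1} \<times> {0..1} \<longrightarrow>
           0 < snd x \<and> snd x < 1 \<and> isCont (\<lambda>t. g (fst x, t)) (snd x)"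
proof -
  define Q where "Q x \<longleftrightarrow> (x \<in> {0..1} \<times> {0..1} \<longrightarrow>
      0 < snd x \<and> snd x < 1 \<and> g x = lim (\<lambda>n. g (fst x, snd x - snd x / real (n + 2))))" for x
  have [measurable]: "g \<in> borel_measurable (lborel \<Otimes>\<^sub>M lborel)"
    using g by (simp add: lborel_prod)
  have "{x \<in> space (lborel \<Otimes>\<^sub>M lborel). Q x} \<in> sets (lborel \<Otimes>\<^sub>M lborel)"
    unfolding Q_def by measurable
  moreover have "AE u in lborel. AE v in lborel. Q (u, v)"
  proof (rule AE_I2)
    fix u :: real
    show "AE v in lborel. Q (u, v)"
    proof (cases "u \<in> {0..1}")
      case True
      let ?N = "{0, 1} \<union> {a\<in>{0<..<1}. \<not> isCont (\<lambda>t. g (u, t)) a}"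
      have "countable ?N"
        using countable_discont_antimono[OF decr_rcont_antimono_on] sections True by auto
      moreover have "{v \<in> space lborel. \<not> Q (u, v)} \<subseteq> ?N"
        using isCont_iff_left_sequence[of "\<lambda>t. g (u, t)"] sections True by (auto simp: Q_def)
      ultimately show ?thesis
        by (intro AE_I'[of ?N] countable_imp_null_set_lborel)
    qed (auto simp: Q_def intro!: AE_I2)
  qed
  ultimately have "AE x in lborel \<Otimes>\<^sub>M lborel. Q x"
    by (rule lborel_pair.AE_pair_measure)
  then have "AE x in lborel. Q x"
    unfolding lborel_prod[where 'a = real and 'b = real] .
  then show ?thesis
  proof (rule eventually_mono)
    fix x :: "real \<times> real"
    assume "Q x"
    then show "x \<in> {0..1} \<times> {0..1} \<longrightarrow> 0 < snd x \<and> snd x < 1 \<and> isCont (\<lambda>t. g (fst x, t)) (snd x)"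
      using isCont_iff_left_sequence[of "\<lambda>t. g (fst x, t)"] sections by (auto simp: Q_def mem_Times_iff)
  qed
qed

definition has_partial2_ae :: "(real \<Rightarrow> real \<Rightarrow> real) \<Rightarrow> (real \<times> real \<Rightarrow> real) \<Rightarrow> bool" where
  "has_partial2_ae F H \<longleftrightarrow>
     (AE x in lborel. x \<in> {0..1} \<times> {0..1} \<longrightarrow> (F (fst x) has_real_derivative H x) (at (snd x)))"

lemma has_partial2_ae_sections:
  fixes F :: "real \<Rightarrow> real \<Rightarrow> real" and g :: "real \<times> real \<Rightarrow> real"
  assumes g: "g \<in> borel_measurable borel"
    and sections: "\<And>u. 0 \<le> u \<Longrightarrow> u \<le> 1 \<Longrightarrow> decr_rcont (\<lambda>t. g (u, t)) \<and> supergradient (F u) (\<lambda>t. g (u, t))"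
  shows "has_partial2_ae F g"
proof -
  have "AE x in lborel. x \<in> {0..1} \<times> {0..1} \<longrightarrow>
      0 < snd x \<and> snd x < 1 \<and> isCont (\<lambda>t. g (fst x, t)) (snd x)"
    by (rule AE_isCont_sections[OF g]) (use sections in blast)
  then show ?thesis
    unfolding has_partial2_ae_def
  proof (rule eventually_mono, intro impI)
    fix x :: "real \<times> real"
    assume cont: "x \<in> {0..1} \<times> {0..1} \<longrightarrow> 0 < snd x \<and> snd x < 1 \<and> isCont (\<lambda>t. g (fst x, t)) (snd x)"
      and x: "x \<in> {0..1} \<times> {0..1}"
    then have "supergradient (F (fst x)) (\<lambda>t. g (fst x, t))"
      using sections by (auto simp: mem_Times_iff)
    from supergradient_has_real_derivative[OF this, of "snd x"] cont x
    show "(F (fst x) has_real_derivative g x) (at (snd x))"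
      by simp
  qed
qed

lemma has_partial2_ae_diff:
  assumes "has_partial2_ae F H" "has_partial2_ae G K"
  shows "has_partial2_ae (\<lambda>u v. F u v - G u v) (\<lambda>x. H x - K x)"
  using assms unfolding has_partial2_ae_def by (auto elim!: eventually_elim2 intro: DERIV_diff)

lemma norm_d2_1_eq_iterated:
  assumes F: "has_partial2_ae F H" and [measurable]: "H \<in> borel_measurable borel"
  shows "norm_d2 1 F = enn2real (\<integral>\<^sup>+u\<in>{0..1}. (\<integral>\<^sup>+v\<in>{0..1}. ennreal \<bar>H (u, v)\<bar> \<partial>lborel) \<partial>lborel)"
proof -
  have "AE x in lborel. x \<in> {0..1} \<times> {0..1} \<longrightarrow> partial2 F (fst x) (snd x) = H x"
    using F unfolding has_partial2_ae_def partial2_def by (auto elim!: eventually_mono intro: DERIV_imp_deriv)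
  then have "(\<integral>\<^sup>+x. indicator ({0..1} \<times> {0..1}) x * ennreal (\<bar>partial2 F (fst x) (snd x)\<bar> powr 1) \<partial>lborel)
      = (\<integral>\<^sup>+x. indicator ({0..1} \<times> {0..1}) x * ennreal \<bar>H x\<bar> \<partial>(lborel \<Otimes>\<^sub>M lborel))"
    unfolding lborel_prod[where 'a = real and 'b = real]
    by (intro nn_integral_cong_AE) (auto elim!: eventually_mono simp: indicator_def)
  also have "\<dots> = (\<integral>\<^sup>+u. \<integral>\<^sup>+v. indicator ({0..1} \<times> {0..1}) (u, v) * ennreal \<bar>H (u, v)\<bar> \<partial>lborel \<partial>lborel)"
  proof (rule lborel.nn_integral_fst[symmetric])
    have [measurable]: "H \<in> borel_measurable (lborel \<Otimes>\<^sub>M lborel)"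
      unfolding lborel_prod[where 'a = real and 'b = real] by simp
    have [measurable]: "{0..1::real} \<times> {0..1::real} \<in> sets (lborel \<Otimes>\<^sub>M lborel)"
      by (rule pair_measureI) auto
    show "(\<lambda>x::real \<times> real. indicator ({0..1} \<times> {0..1}) x * ennreal \<bar>H x\<bar>) \<in> borel_measurable (lborel \<Otimes>\<^sub>M lborel)"
      by measurable
  qed
  also have "\<dots> = (\<integral>\<^sup>+u\<in>{0..1}. (\<integral>\<^sup>+v\<in>{0..1}. ennreal \<bar>H (u, v)\<bar> \<partial>lborel) \<partial>lborel)"
    by (intro nn_integral_cong) (auto simp: indicator_def mult.commute)
  finally show ?thesis
    unfolding norm_d2_def by simp
qed

lemma has_partial2_ae_SI_copula:
  assumes D: "SI_copula D"
  shows "has_partial2_ae D (partial2_right D)"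
  by (rule has_partial2_ae_sections)
    (use D borel_measurable_partial2_right SI_copula_section partial2_right_section in \<open>auto simp: SI_copula_def\<close>)

lemma has_partial2_ae_S_op:
  assumes D: "SI_copula D"
  shows "has_partial2_ae (S_op D) (partial2_right_inv D)"
  by (rule has_partial2_ae_sections)
    (use D borel_measurable_partial2_right_inv S_op_section partial2_right_inv_section in auto)

lemma borel_measurable_right_deriv_section:
  assumes D: "SI_copula D" and u: "0 \<le> u" "u \<le> 1"
  shows "right_deriv (D u) \<in> borel_measurable borel"
proof -
  have "(\<lambda>t::real. (u, t)) \<in> borel_measurable borel"
    by (intro borel_measurable_continuous_onI continuous_intros)
  from measurable_compose[OF this borel_measurable_partial2_right] D
  show ?thesis
    using partial2_right_section[OF u] by (simp add: SI_copula_def)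
qed

lemma set_nn_integral_partial2_right_inv_diff:
  assumes D: "SI_copula D" and E: "SI_copula E" and u: "0 \<le> u" "u \<le> 1"
  shows "(\<integral>\<^sup>+v\<in>{0..1}. ennreal \<bar>partial2_right_inv D (u, v) - partial2_right_inv E (u, v)\<bar> \<partial>lborel)
       = (\<integral>\<^sup>+v\<in>{0..1}. ennreal \<bar>partial2_right D (u, v) - partial2_right E (u, v)\<bar> \<partial>lborel)"
  using nn_integral_abs_diff_gen_inv[OF SI_copula_section(2)[OF D u] SI_copula_section(2)[OF E u]
      borel_measurable_right_deriv_section[OF D u] borel_measurable_right_deriv_section[OF E u]]
  by (simp add: partial2_right_def partial2_right_inv_def u)

lemma set_nn_integral_partial2_right_inv:
  assumes D: "SI_copula D" and u: "0 \<le> u" "u \<le> 1"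
  shows "(\<integral>\<^sup>+v\<in>{0..1}. ennreal \<bar>partial2_right_inv D (u, v)\<bar> \<partial>lborel)
       = (\<integral>\<^sup>+v\<in>{0..1}. ennreal \<bar>partial2_right D (u, v)\<bar> \<partial>lborel)"
proof -
  have zero: "decr_rcont (\<lambda>_. 0)"
    by (auto simp: decr_rcont_def monotone_on_def)
  have "(\<integral>\<^sup>+v\<in>{0..1}. ennreal \<bar>right_deriv (D u) v - 0\<bar> \<partial>lborel)
      = (\<integral>\<^sup>+v\<in>{0..1}. ennreal \<bar>gen_inv (right_deriv (D u)) v - gen_inv (\<lambda>_. 0) v\<bar> \<partial>lborel)"
    by (rule nn_integral_abs_diff_gen_inv[OF SI_copula_section(2)[OF D u] zero
          borel_measurable_right_deriv_section[OF D u]]) simp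
  also have "\<dots> = (\<integral>\<^sup>+v\<in>{0..1}. ennreal \<bar>gen_inv (right_deriv (D u)) v\<bar> \<partial>lborel)"
    by (rule set_nn_integral_cong) (auto simp: gen_inv_zero)
  finally show ?thesis
    by (simp add: partial2_right_def partial2_right_inv_def u)
qed

theorem mainTheorem8:
  fixes D E :: "real \<Rightarrow> real \<Rightarrow> real"
  assumes "SI_copula D" and "SI_copula E"
  shows "(\<forall>v\<in>{0..1}. \<forall>u\<in>{0..1}. S_op (S_op D) v u = D v u)
       \<and> dist_d2 1 (S_op D) (S_op E) = dist_d2 1 D E
       \<and> norm_d2 1 (S_op D) = norm_d2 1 D"
proof (intro conjI)
  note D = assms(1) and E = assms(2)
  have [measurable]: "partial2_right D \<in> borel_measurable borel" "partial2_right E \<in> borel_measurable borel"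
    using D E borel_measurable_partial2_right by (auto simp: SI_copula_def)
  note [measurable] = borel_measurable_partial2_right_inv[OF D] borel_measurable_partial2_right_inv[OF E]
  show "\<forall>v\<in>{0..1}. \<forall>u\<in>{0..1}. S_op (S_op D) v u = D v u"
    using S_op_S_op[OF D] by auto
  have "has_partial2_ae (\<lambda>u v. S_op D u v - S_op E u v) (\<lambda>x. partial2_right_inv D x - partial2_right_inv E x)"
    by (intro has_partial2_ae_diff has_partial2_ae_S_op D E)
  moreover have "has_partial2_ae (\<lambda>u v. D u v - E u v) (\<lambda>x. partial2_right D x - partial2_right E x)"
    by (intro has_partial2_ae_diff has_partial2_ae_SI_copula D E)
  ultimately show "dist_d2 1 (S_op D) (S_op E) = dist_d2 1 D E"
    unfolding dist_d2_def
    by (simp add: norm_d2_1_eq_iterated)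
      (rule arg_cong[where f = enn2real], rule set_nn_integral_cong; simp add: set_nn_integral_partial2_right_inv_diff[OF D E])
  show "norm_d2 1 (S_op D) = norm_d2 1 D"
    using has_partial2_ae_S_op[OF D] has_partial2_ae_SI_copula[OF D]
    by (simp add: norm_d2_1_eq_iterated)
      (rule arg_cong[where f = enn2real], rule set_nn_integral_cong; simp add: set_nn_integral_partial2_right_inv[OF D])
qed

end
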